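(* Let $f$ be a real entire function of genus $1$ with only negative zeros and with $f(0)>0$. For $s>0$ the function $$h(z)=(\log f)(z)-(\log f)(z+s),\qquad z\in\mathbb C\setminus(-\infty,0],$$ is a Pick function. Its representing measure is supported on $(-\infty,0]$, and $\lim_{y\to\infty}h(iy)/(iy)=0$.
   Context: Here $\log f$ denotes the holomorphic logarithm of $f$ on the cut plane $\mathbb C\setminus(-\infty,0]$ (where $f$ has no zeros) that is real on $(0,\infty)$. A Pick function is a holomorphic function $p$ on the upper half-plane with $\Im p\geq0$ there; every such $p$ has a representation $p(z)=\alpha z+\beta+\int_{-\infty}^\infty\left(\frac{1}{t-z}-\frac{t}{t^2+1}\right)d\mu(t)$ with $\alpha\geq0$, $\beta\in\mathbb R$ and $\mu$ a positive measure with $\int d\mu(t)/(1+t^2)<\infty$; $\mu$ is called the representing measure. *)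

theory Defs
  imports "HOL-Complex_Analysis.Complex_Analysis" "HOL-Probability.Probability"
          "HOL-Computational_Algebra.Polynomial"
begin

definition weierstrass_factor :: "nat \<Rightarrow> complex \<Rightarrow> complex" where
  "weierstrass_factor p z = (1 - z) * exp (\<Sum>k=1..p. z ^ k / of_nat k)"

text \<open>The zeros are parametrised by their
  reciprocals w_n = 1/a_n; w_n = 0 gives a trivial factor (this allows finitely many zeros).\<close>
definition genus_le :: "(complex \<Rightarrow> complex) \<Rightarrow> nat \<Rightarrow> bool" where
  "genus_le f p \<longleftrightarrow>
     (\<exists>(m::nat) (g::complex poly) (w::nat \<Rightarrow> complex).
        degree g \<le> p \<and> summable (\<lambda>n. norm (w n) ^ (p + 1)) \<and>
        (\<forall>z. f z = z ^ m * exp (poly g z) * (\<Prod>n. weierstrass_factor p (z * w n))))"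

definition has_genus :: "(complex \<Rightarrow> complex) \<Rightarrow> nat \<Rightarrow> bool" where
  "has_genus f p \<longleftrightarrow> genus_le f p \<and> (\<forall>q<p. \<not> genus_le f q)"

definition cut_plane :: "complex set" where
  "cut_plane = UNIV - complex_of_real ` {..0}"

definition upper_half_plane :: "complex set" where
  "upper_half_plane = {z. Im z > 0}"

definition pick_function :: "(complex \<Rightarrow> complex) \<Rightarrow> bool" where
  "pick_function p \<longleftrightarrow> p holomorphic_on upper_half_plane \<and>
     (\<forall>z\<in>upper_half_plane. Im (p z) \<ge> 0)"

definition pick_representing_measure :: "(complex \<Rightarrow> complex) \<Rightarrow> real measure \<Rightarrow> bool" where
  "pick_representing_measure p \<mu> \<longleftrightarrow>
     sets \<mu> = sets borel \<and>
     (\<integral>\<^sup>+ t. ennreal (1 / (1 + t\<^sup>2)) \<partial>\<mu>) < \<infinity> \<and>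
     (\<exists>\<alpha> \<beta> :: real. \<alpha> \<ge> 0 \<and>
        (\<forall>z\<in>upper_half_plane.
           p z = of_real \<alpha> * z + of_real \<beta> +
                 (\<integral> t. (1 / (of_real t - z) - of_real (t / (t\<^sup>2 + 1))) \<partial>\<mu>)))"

end

theory Submission
  imports Defs
begin

text \<open>Write f(z) = exp(g(z)) \<Prod>_n E_1(z r_n) with deg g \<le> 1 and real r_n = 1/a_n \<le> 0,
  \<Sum> r_n^2 < \<infinity>. For a single zero a = 1/r < 0 the quotient E_1(zr) / E_1((z + s)r) has the logarithm
  Ln(z - a) - Ln(z - a + s) - sr, which equals the integral of 1/(t - z) - r over [a - s, a] and is
  O(r^2) locally uniformly on the cut plane. So h minus the sum of these logarithms has the
  constant exponential exp(-bs), b the linear coefficient of g, and is therefore a constant, real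
  because h is real on (0, \<infinity>). Replacing r by t/(t^2 + 1) in each integrand only shifts it by a
  real constant of size O(r^2), which exhibits h as a Pick function with \<alpha> = 0 whose measure is
  Lebesgue measure counted once for each interval [a_n - s, a_n] \<subseteq> (-\<infinity>, 0). Dominated convergence
  against 1/(1 + t^2) gives h(iy)/(iy) \<rightarrow> 0.\<close>

lemma cut_plane_eq: "cut_plane = - \<real>\<^sub>\<le>\<^sub>0"
  by (auto simp: cut_plane_def nonpos_Reals_def)

lemma mem_cut_plane_iff: "z \<in> cut_plane \<longleftrightarrow> Im z \<noteq> 0 \<or> Re z > 0"
  by (auto simp: cut_plane_eq complex_nonpos_Reals_iff)

lemma open_cut_plane: "open cut_plane"
  by (simp add: cut_plane_eq open_Compl)

lemma connected_cut_plane: "connected cut_plane"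
proof -
  define U where "U = {z. Im z > 0} \<union> {z. Re z > 0}"
  have cU: "connected U" unfolding U_def
  proof (rule connected_Un)
    have "1 + \<i> \<in> {z. Im z > 0} \<inter> {z. Re z > 0}" by simp
    thus "{z. Im z > 0} \<inter> {z. Re z > 0} \<noteq> {}" by blast
  qed (simp_all add: convex_connected convex_halfspace_Im_gt convex_halfspace_Re_gt)
  have "1 - \<i> \<in> U \<inter> {z. Im z < 0}" by (simp add: U_def)
  hence "connected (U \<union> {z. Im z < 0})"
    by (intro connected_Un cU convex_connected convex_halfspace_Im_lt) blast
  moreover have "cut_plane = U \<union> {z. Im z < 0}"
    by (auto simp: U_def mem_cut_plane_iff)
  ultimately show ?thesis by simp
qed

lemma cut_plane_add_nonneg: "z \<in> cut_plane \<Longrightarrow> x \<ge> 0 \<Longrightarrow> z + of_real x \<in> cut_plane"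
  by (auto simp: mem_cut_plane_iff)

lemma cut_plane_locally_away_from_cut:
  assumes "z0 \<in> cut_plane"
  obtains \<epsilon> where "\<epsilon> > 0" "\<And>z t. z \<in> ball z0 \<epsilon> \<Longrightarrow> t \<le> 0 \<Longrightarrow> \<epsilon> \<le> norm (of_real t - z)"
proof -
  obtain e where e: "e > 0" "ball z0 e \<subseteq> cut_plane"
    using open_cut_plane assms open_contains_ball by blast
  show thesis
  proof (rule that)
    fix z t assume z: "z \<in> ball z0 (e / 2)" and "t \<le> (0::real)"
    hence "of_real t \<notin> ball z0 e" using e(2) by (auto simp: cut_plane_def)
    moreover have "dist z0 (of_real t) \<le> dist z0 z + norm (of_real t - z)"
      using dist_triangle[of z0 "of_real t" z] by (simp add: dist_norm norm_minus_commute)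
    ultimately show "e / 2 \<le> norm (of_real t - z)" using z by simp
  qed (use e in simp)
qed

lemma Im_le_norm_real_minus: "Im z \<le> norm (of_real t - z)"
  using abs_Im_le_cmod[of "of_real t - z"] by simp

lemma continuous_exp_constant_imp_constant_on:
  fixes q :: "'a::topological_space \<Rightarrow> complex"
  assumes "connected S" "continuous_on S q" "\<And>z. z \<in> S \<Longrightarrow> exp (q z) = c"
  shows "q constant_on S"
proof (rule continuous_discrete_range_constant[OF assms(1,2)])
  fix x assume x: "x \<in> S"
  show "\<exists>e>0. \<forall>y. y \<in> S \<and> q y \<noteq> q x \<longrightarrow> e \<le> norm (q y - q x)"
  proof (intro exI[of _ "2 * pi"] conjI allI impI)
    fix y assume y: "y \<in> S \<and> q y \<noteq> q x"
    hence "exp (q y) = exp (q x)" using assms(3) x by simp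
    then obtain k :: int where k: "q y = q x + of_real (2 * of_int k * pi) * \<i>"
      by (auto simp: exp_eq)
    hence "k \<noteq> 0" using y by auto
    hence "2 * pi * 1 \<le> 2 * pi * \<bar>of_int k\<bar>" by (intro mult_left_mono) auto
    thus "2 * pi \<le> norm (q y - q x)" using k by (simp add: norm_mult abs_mult)
  qed simp
qed

lemma poly_degree_le_1:
  fixes g :: "'a::comm_semiring_1 poly"
  assumes "degree g \<le> 1"
  shows "poly g z = coeff g 0 + coeff g 1 * z"
proof -
  have "poly g z = (\<Sum>i\<le>degree g. coeff g i * z ^ i)" by (rule poly_altdef)
  also have "\<dots> = (\<Sum>i\<le>1. coeff g i * z ^ i)"
    by (rule sum.mono_neutral_left) (use assms in \<open>auto simp: coeff_eq_0\<close>)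
  finally show ?thesis by simp
qed

lemma convergent_prod_weierstrass_factor_1:
  assumes "summable (\<lambda>n. norm (w n) ^ 2)"
  shows "convergent_prod (\<lambda>n. weierstrass_factor 1 (z * w n))"
proof -
  have "(\<lambda>n. norm (w n) ^ 2) \<longlonglongrightarrow> 0" by (rule summable_LIMSEQ_zero[OF assms])
  hence "(\<lambda>n. norm z * sqrt (norm (w n) ^ 2)) \<longlonglongrightarrow> norm z * sqrt 0"
    by (intro tendsto_intros)
  hence "(\<lambda>n. norm (z * w n)) \<longlonglongrightarrow> 0" by (simp add: norm_mult)
  hence small: "eventually (\<lambda>n. norm (z * w n) < 1/2) sequentially"
    by (rule order_tendstoD) simp
  have "summable (\<lambda>n. norm (weierstrass_factor 1 (z * w n) - 1))"
  proof (rule summable_comparison_test_ev)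
    show "eventually (\<lambda>n. norm (norm (weierstrass_factor 1 (z * w n) - 1))
            \<le> 3 * norm z ^ 2 * norm (w n) ^ 2) sequentially"
      using small
    proof eventually_elim
      case (elim n)
      have "norm (Weierstrass_Factorization.weierstrass_factor 1 (z * w n) - 1)
              \<le> 3 * norm (z * w n) ^ Suc 1"
        by (rule weierstrass_factor_bound) (use elim in simp)
      thus ?case
        by (simp add: weierstrass_factor_def Weierstrass_Factorization.weierstrass_factor_def
            norm_mult power_mult_distrib power2_eq_square mult_ac)
    qed
    show "summable (\<lambda>n. 3 * norm z ^ 2 * norm (w n) ^ 2)" by (rule summable_mult[OF assms])
  qed
  thus ?thesis
    by (intro abs_convergent_prod_imp_convergent_prod) (simp add: abs_convergent_prod_conv_summable)
qed

lemma genus_one_nonpos_zeros_factorization: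
  assumes genus: "has_genus f 1" and f0: "f 0 \<noteq> 0"
    and zeros: "\<And>z. f z = 0 \<Longrightarrow> z \<in> \<real> \<and> Re z < 0"
  obtains g r where "degree g \<le> 1" "\<And>n. r n \<le> 0" "summable (\<lambda>n. r n ^ 2)"
    "\<And>z. f z = exp (poly g z) * (\<Prod>n. weierstrass_factor 1 (z * of_real (r n)))"
proof -
  from genus obtain m g w where deg: "degree g \<le> 1"
    and w': "summable (\<lambda>n. norm (w n) ^ (1 + 1))"
    and f: "\<forall>z. f z = z ^ m * exp (poly g z) * (\<Prod>n. weierstrass_factor 1 (z * w n))"
    unfolding has_genus_def genus_le_def by blast
  have w: "summable (\<lambda>n. norm (w n) ^ 2)" using w' by (simp only: one_add_one)
  have "m = 0"
  proof (rule ccontr)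
    assume "m \<noteq> 0"
    thus False using f0 f by simp
  qed
  hence f': "f z = exp (poly g z) * (\<Prod>n. weierstrass_factor 1 (z * w n))" for z
    using f by simp
  have "\<exists>x\<le>0. w n = of_real x" for n
  proof (cases "w n = 0")
    case False
    define a where "a = 1 / w n"
    have "weierstrass_factor 1 (a * w n) = 0" using False by (simp add: a_def weierstrass_factor_def)
    moreover have "(\<lambda>k. weierstrass_factor 1 (a * w k)) has_prod (\<Prod>k. weierstrass_factor 1 (a * w k))"
      by (rule convergent_prod_has_prod[OF convergent_prod_weierstrass_factor_1[OF w]])
    ultimately have "(\<Prod>k. weierstrass_factor 1 (a * w k)) = 0" by (rule has_prod_zeroI[rotated])
    hence "a \<in> \<real> \<and> Re a < 0" using zeros[of a] by (simp add: f')
    then obtain x where "a = of_real x" "x < 0" by (auto elim: Reals_cases)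
    moreover have "w n = 1 / a" using False by (simp add: a_def)
    ultimately show ?thesis by (intro exI[of _ "1/x"]) simp
  qed simp
  then obtain r where r: "\<And>n. r n \<le> 0" and w_eq: "w = (\<lambda>n. of_real (r n))"
    by (metis fun_eq_iff)
  show thesis
    by (rule that[OF deg r]) (use w f' in \<open>simp_all add: w_eq\<close>)
qed

lemma square_plus_1_pos: "0 < t\<^sup>2 + (1::real)"
  by (simp add: add_nonneg_pos)

lemma abs_le_square_plus_1: "\<bar>t\<bar> \<le> t\<^sup>2 + (1::real)"
  using zero_le_power2[of "\<bar>t\<bar> - 1"] by (simp add: power2_eq_square algebra_simps)

text \<open>The interval [a - s, a] below the zero a = 1/r; r = 0 encodes a missing zero and must be
  excluded explicitly, since 1/0 = 0 in HOL.\<close>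

definition zero_interval :: "real \<Rightarrow> real \<Rightarrow> real set" where
  "zero_interval s r = (if r = 0 then {} else {1/r - s..1/r})"

definition factor_log_quotient :: "real \<Rightarrow> real \<Rightarrow> complex \<Rightarrow> complex" where
  "factor_log_quotient s r z = (if r = 0 then 0 else
     Ln (z - of_real (1/r)) - Ln (z - of_real (1/r) + of_real s) - of_real (s * r))"

lemma mem_zero_interval_D:
  assumes "r \<le> 0" "t \<in> zero_interval s r"
  shows "r < 0" "1/r - s \<le> t" "t \<le> 1/r" "t < 0"
proof -
  show r: "r < 0" and "1/r - s \<le> t" and t: "t \<le> 1/r"
    using assms by (auto simp: zero_interval_def split: if_splits)
  have "1/r < 0" using r by simp
  thus "t < 0" using t by linarith
qed

lemma inverse_abs_le_on_zero_interval:
  assumes "r \<le> 0" "t \<in> zero_interval s r"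
  shows "1 / \<bar>t\<bar> \<le> \<bar>r\<bar>"
proof -
  from mem_zero_interval_D[OF assms] have r: "r < 0" and "t \<le> 1/r" "t < 0" by auto
  hence "1 / \<bar>r\<bar> \<le> \<bar>t\<bar>" by (simp add: divide_simps)
  thus ?thesis using r \<open>t < 0\<close> by (simp add: divide_simps mult.commute)
qed

lemma weight_le_on_zero_interval:
  assumes "r \<le> 0" "t \<in> zero_interval s r"
  shows "1 / (1 + t\<^sup>2) \<le> r\<^sup>2"
proof -
  have t: "t < 0" by (rule mem_zero_interval_D(4)[OF assms])
  have "1 / (1 + t\<^sup>2) \<le> (1 / \<bar>t\<bar>)\<^sup>2"
    using t by (simp add: divide_simps power2_eq_square)
  also have "\<dots> \<le> \<bar>r\<bar>\<^sup>2"
    by (rule power_mono[OF inverse_abs_le_on_zero_interval[OF assms]]) simp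
  finally show ?thesis by simp
qed

lemma cut_plane_shift_not_nonpos:
  assumes "z \<in> cut_plane" "r < 0" "x \<ge> 0"
  shows "z - of_real (1/r) + of_real x \<notin> \<real>\<^sub>\<le>\<^sub>0"
proof -
  have "1/r < 0" using assms(2) by simp
  hence "x - 1/r \<ge> 0" using assms(3) by linarith
  hence "z + of_real (x - 1/r) \<in> cut_plane" by (rule cut_plane_add_nonneg[OF assms(1)])
  thus ?thesis by (simp add: cut_plane_eq algebra_simps)
qed

lemma has_integral_factor_log_quotient:
  assumes "r \<le> 0" "s \<ge> 0" "z \<in> cut_plane"
  shows "((\<lambda>t. 1 / (of_real t - z) - of_real r) has_integral factor_log_quotient s r z)
           (zero_interval s r)"
proof (cases "r = 0")
  case False
  hence r: "r < 0" using assms(1) by simp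
  define F where "F t = Ln (z - of_real t) - of_real (r * t)" for t :: real
  have "((\<lambda>t. 1 / (of_real t - z) - of_real r) has_integral (F (1/r) - F (1/r - s)))
          {1/r - s..1/r}"
  proof (rule fundamental_theorem_of_calculus)
    show "1/r - s \<le> 1/r" using assms(2) by simp
    fix t assume t: "t \<in> {1/r - s..1/r}"
    have "z - of_real (1/r) + of_real (1/r - t) \<notin> \<real>\<^sub>\<le>\<^sub>0"
      by (rule cut_plane_shift_not_nonpos[OF assms(3) r]) (use t in simp)
    hence nonpos: "z - of_real t \<notin> \<real>\<^sub>\<le>\<^sub>0" by (simp add: algebra_simps)
    have "((\<lambda>w. Ln (z - w) - of_real r * w) has_field_derivative
             (inverse (z - of_real t) * (-1) - of_real r)) (at (of_real t))"
      by (rule derivative_eq_intros has_field_derivative_Ln[THEN DERIV_chain2] | use nonpos in simp)+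
    hence "(F has_vector_derivative (inverse (z - of_real t) * (-1) - of_real r))
             (at t within {1/r - s..1/r})"
      unfolding F_def by (auto dest: has_vector_derivative_real_field)
    moreover have "z - of_real t \<noteq> 0" using nonpos by auto
    hence "inverse (z - of_real t) * (-1) - of_real r = 1 / (of_real t - z) - of_real r"
      by (simp add: field_simps)
    ultimately show "(F has_vector_derivative (1 / (of_real t - z) - of_real r))
                       (at t within {1/r - s..1/r})" by simp
  qed
  moreover have "F (1/r) - F (1/r - s) = factor_log_quotient s r z"
    using False by (simp add: F_def factor_log_quotient_def algebra_simps)
  ultimately show ?thesis using False by (simp add: zero_interval_def)
qed (simp add: zero_interval_def factor_log_quotient_def)

lemma continuous_on_factor_log_quotient:
  assumes "r \<le> 0" "s \<ge> 0"
  shows "continuous_on cut_plane (factor_log_quotient s r)"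
proof (cases "r = 0")
  case False
  hence r: "r < 0" using assms(1) by simp
  have "continuous_on cut_plane
          (\<lambda>z. Ln (z - of_real (1/r)) - Ln (z - of_real (1/r) + of_real s) - of_real (s * r))"
  proof (intro continuous_intros)
    fix z assume "z \<in> cut_plane"
    from cut_plane_shift_not_nonpos[OF this r, of 0] cut_plane_shift_not_nonpos[OF this r assms(2)]
    show "z - of_real (1/r) \<notin> \<real>\<^sub>\<le>\<^sub>0" "z - of_real (1/r) + of_real s \<notin> \<real>\<^sub>\<le>\<^sub>0"
      by simp_all
  qed
  thus ?thesis using False by (simp add: factor_log_quotient_def)
qed (simp add: factor_log_quotient_def)

lemma weierstrass_factor_1_shift:
  assumes "r \<le> 0" "s \<ge> 0" "z \<in> cut_plane"
  shows "weierstrass_factor 1 (z * of_real r) =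
           weierstrass_factor 1 ((z + of_real s) * of_real r) * exp (factor_log_quotient s r z)"
proof (cases "r = 0")
  case False
  hence r: "r < 0" using assms(1) by simp
  define u where "u = z - of_real (1/r)"
  define v where "v = z - of_real (1/r) + of_real s"
  have "u \<notin> \<real>\<^sub>\<le>\<^sub>0" "v \<notin> \<real>\<^sub>\<le>\<^sub>0"
    unfolding u_def v_def using cut_plane_shift_not_nonpos[OF assms(3) r] assms(2) by force+
  hence u: "u \<noteq> 0" and v: "v \<noteq> 0" by auto
  have exp_log: "exp (factor_log_quotient s r z) = u / v * exp (- of_real (s * r))"
    using False u v by (simp add: factor_log_quotient_def u_def v_def exp_diff exp_minus divide_inverse)
  have inv: "of_real r * of_real (1/r) = (1::complex)" using False by (simp flip: of_real_mult)
  have "(1 - (z + of_real s) * of_real r) * u = (1 - z * of_real r) * v"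
    using False unfolding u_def v_def by (simp add: algebra_simps inv)
  hence cancel: "(1 - (z + of_real s) * of_real r) * u / v = 1 - z * of_real r"
    using v by (metis nonzero_mult_div_cancel_right)
  have "weierstrass_factor 1 ((z + of_real s) * of_real r) * exp (factor_log_quotient s r z) =
          (1 - (z + of_real s) * of_real r) * u / v *
          (exp ((z + of_real s) * of_real r) * exp (- of_real (s * r)))"
    by (simp add: weierstrass_factor_def exp_log)
  also have "exp ((z + of_real s) * of_real r) * exp (- of_real (s * r)) = exp (z * of_real r)"
    by (simp flip: exp_add add: algebra_simps)
  finally show ?thesis by (simp add: weierstrass_factor_def cancel)
qed (simp add: factor_log_quotient_def weierstrass_factor_def)

lemma Im_factor_log_quotient_of_real:
  assumes "r \<le> 0" "s \<ge> 0" "x > 0"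
  shows "Im (factor_log_quotient s r (of_real x)) = 0"
proof (cases "r = 0")
  case False
  hence "1/r < 0" using assms(1) by simp
  hence pos: "x - 1/r > 0" "x - 1/r + s > 0" using assms by linarith+
  have "factor_log_quotient s r (of_real x) =
          Ln (of_real (x - 1/r)) - Ln (of_real (x - 1/r + s)) - of_real (s * r)"
    using False by (simp add: factor_log_quotient_def)
  also have "\<dots> = of_real (ln (x - 1/r) - ln (x - 1/r + s) - s * r)"
    by (simp only: Ln_of_real[OF pos(1)] Ln_of_real[OF pos(2)]) simp
  finally show ?thesis by simp
qed (simp add: factor_log_quotient_def)

lemma mult_abs_le_of_lower_bounds:
  fixes t d R \<delta> :: real
  assumes "\<delta> \<le> d" "\<bar>t\<bar> - R \<le> d" "R \<ge> 0" "\<delta> > 0"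
  shows "\<delta> * \<bar>t\<bar> \<le> (R + \<delta>) * d"
proof (cases "\<bar>t\<bar> \<le> R + \<delta>")
  case True
  thus ?thesis using assms mult_mono[of \<delta> d "\<bar>t\<bar>" "R + \<delta>"] by (simp add: mult.commute)
next
  case False
  have "\<delta> * \<bar>t\<bar> \<le> (R + \<delta>) * (\<bar>t\<bar> - R)"
    using False assms(3) mult_left_mono[of "R + \<delta>" "\<bar>t\<bar>" R] by (simp add: algebra_simps)
  also have "\<dots> \<le> (R + \<delta>) * d" using assms by (intro mult_left_mono) auto
  finally show ?thesis .
qed

text \<open>With a = 1/r we have 1/(t - z) - r = r (a - t + z) / (t - z); the numerator is at most
  s + R, and the distance to the cut bounds the denominator below by \<delta> |t| / (R + \<delta>), hence
  by \<delta> / (|r| (R + \<delta>)).\<close>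

lemma norm_factor_integrand_le:
  fixes z :: complex
  assumes r: "r \<le> 0" and t: "t \<in> zero_interval s r" and z: "norm z \<le> R" "\<delta> > 0"
    and away: "\<And>u. u \<le> 0 \<Longrightarrow> \<delta> \<le> norm (of_real u - z)"
  shows "norm (1 / (of_real t - z) - of_real r) \<le> (s + R) * (R + \<delta>) / \<delta> * r\<^sup>2"
proof -
  from mem_zero_interval_D[OF r t] have r0: "r < 0" and "1/r - s \<le> t" "t \<le> 1/r" "t < 0"
    by auto
  define d where "d = norm (of_real t - z)"
  have R: "R \<ge> 0" using z(1) norm_ge_zero order_trans by blast
  have "\<delta> \<le> d" using away[of t] \<open>t < 0\<close> by (simp add: d_def)
  have "\<bar>t\<bar> - R \<le> d"
    using norm_triangle_ineq2[of "of_real t" z] z(1) by (simp add: d_def)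
  have "\<delta> * \<bar>t\<bar> \<le> (R + \<delta>) * d"
    using \<open>\<delta> \<le> d\<close> \<open>\<bar>t\<bar> - R \<le> d\<close> R z(2) by (rule mult_abs_le_of_lower_bounds)
  moreover have "1 / \<bar>r\<bar> \<le> \<bar>t\<bar>"
    using inverse_abs_le_on_zero_interval[OF r t] \<open>t < 0\<close> r0 by (simp add: divide_simps mult.commute)
  hence "\<delta> * (1 / \<bar>r\<bar>) \<le> \<delta> * \<bar>t\<bar>" using z(2) by (intro mult_left_mono) auto
  ultimately have "\<delta> / \<bar>r\<bar> \<le> d * (R + \<delta>)" by (simp add: mult.commute)
  moreover have "0 < R + \<delta>" using R z(2) by simp
  ultimately have "\<delta> / \<bar>r\<bar> / (R + \<delta>) \<le> d" by (simp only: pos_divide_le_eq)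
  hence d: "\<delta> / (\<bar>r\<bar> * (R + \<delta>)) \<le> d" by (simp only: divide_divide_eq_left)
  have pos: "0 < \<delta> / (\<bar>r\<bar> * (R + \<delta>))" using r0 R z(2) by (intro divide_pos_pos mult_pos_pos) auto
  have "of_real t - z \<noteq> 0" using \<open>\<delta> \<le> d\<close> z(2) by (auto simp: d_def)
  moreover have "of_real r * of_real (1/r) = (1::complex)" "r \<noteq> 0"
    using r0 by (simp_all flip: of_real_mult)
  hence "of_real r * (of_real (1/r - t) + z) = 1 - of_real r * (of_real t - z)"
    by (simp add: algebra_simps)
  ultimately have "1 / (of_real t - z) - of_real r = of_real r * (of_real (1/r - t) + z) / (of_real t - z)"
    by (simp add: diff_divide_distrib)
  hence "norm (1 / (of_real t - z) - of_real r) = \<bar>r\<bar> * norm (of_real (1/r - t) + z) / d"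
    by (simp add: d_def norm_mult norm_divide)
  also have "\<dots> \<le> \<bar>r\<bar> * (s + R) / (\<delta> / (\<bar>r\<bar> * (R + \<delta>)))"
  proof (intro frac_le mult_left_mono)
    have "norm (of_real (1/r - t) + z) \<le> \<bar>1/r - t\<bar> + norm z"
      using norm_triangle_ineq[of "of_real (1/r - t)" z] by (simp only: norm_of_real)
    thus "norm (of_real (1/r - t) + z) \<le> s + R"
      using \<open>1/r - s \<le> t\<close> \<open>t \<le> 1/r\<close> z(1) by linarith
  qed (use d pos r0 R \<open>1/r - s \<le> t\<close> \<open>t \<le> 1/r\<close> in \<open>auto intro: mult_nonpos_nonneg\<close>)
  also have "\<dots> = (s + R) * (R + \<delta>) / \<delta> * r\<^sup>2"
    using z(2) by (simp add: field_simps power2_eq_square)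
  finally show ?thesis .
qed

lemma norm_factor_log_quotient_le:
  fixes z :: complex
  assumes "r \<le> 0" "s \<ge> 0" "z \<in> cut_plane" "norm z \<le> R" "\<delta> > 0"
    and "\<And>u. u \<le> 0 \<Longrightarrow> \<delta> \<le> norm (of_real u - z)"
  shows "norm (factor_log_quotient s r z) \<le> s * ((s + R) * (R + \<delta>) / \<delta>) * r\<^sup>2"
proof (cases "r = 0")
  case False
  have R: "R \<ge> 0" using assms(4) norm_ge_zero order_trans by blast
  have "norm (factor_log_quotient s r z)
          \<le> ((s + R) * (R + \<delta>) / \<delta> * r\<^sup>2) * measure lborel (cbox (1/r - s) (1/r))"
    using has_integral_factor_log_quotient[OF assms(1-3)] False
    by (intro has_integral_bound[where f = "\<lambda>t. 1 / (of_real t - z) - of_real r"])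
       (use assms R norm_factor_integrand_le[OF assms(1) _ assms(4-6)] in
        \<open>auto simp: zero_interval_def\<close>)
  thus ?thesis using assms(2) by (simp add: mult_ac)
qed (simp add: factor_log_quotient_def)

lemma abs_cauchy_kernel_correction_le:
  assumes r: "r \<le> 0" and s: "s \<ge> 0" and t: "t \<in> zero_interval s r"
  shows "\<bar>t / (t\<^sup>2 + 1) - r\<bar> \<le> (s + 1) * r\<^sup>2"
proof -
  from mem_zero_interval_D[OF r t] have r0: "r < 0" and "1/r - s \<le> t" "t \<le> 1/r" "t < 0"
    by auto
  have inv: "1 / \<bar>t\<bar> \<le> \<bar>r\<bar>" by (rule inverse_abs_le_on_zero_interval[OF r t])
  have "t / (t\<^sup>2 + 1) - 1/t = - (1 / t * (1 / (t\<^sup>2 + 1)))"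
    using square_plus_1_pos[of t] \<open>t < 0\<close> by (simp add: field_simps) (simp add: power2_eq_square)
  hence "\<bar>t / (t\<^sup>2 + 1) - 1/t\<bar> = 1 / \<bar>t\<bar> * (1 / (t\<^sup>2 + 1))"
    by (simp add: abs_mult add_pos_nonneg)
  also have "\<dots> \<le> \<bar>r\<bar> * \<bar>r\<bar>"
  proof (rule mult_mono[OF inv])
    have "1 / (t\<^sup>2 + 1) \<le> 1 / \<bar>t\<bar>"
      using abs_le_square_plus_1[of t] \<open>t < 0\<close>
      by (intro divide_left_mono mult_pos_pos) (auto simp: add_nonneg_pos)
    thus "1 / (t\<^sup>2 + 1) \<le> \<bar>r\<bar>" using inv by linarith
  qed auto
  finally have first: "\<bar>t / (t\<^sup>2 + 1) - 1/t\<bar> \<le> r\<^sup>2" by (simp add: power2_eq_square)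
  have "1/t - r = r * (1/r - t) * (1/t)" using r0 \<open>t < 0\<close> by (simp add: field_simps)
  hence "\<bar>1/t - r\<bar> = \<bar>r\<bar> * \<bar>1/r - t\<bar> * (1 / \<bar>t\<bar>)" by (simp add: abs_mult)
  also have "\<dots> \<le> \<bar>r\<bar> * s * \<bar>r\<bar>"
    using \<open>1/r - s \<le> t\<close> \<open>t \<le> 1/r\<close> inv
    by (intro mult_mono mult_left_mono) auto
  finally have second: "\<bar>1/t - r\<bar> \<le> s * r\<^sup>2" by (simp add: power2_eq_square mult_ac)
  show ?thesis using first second by (simp add: algebra_simps)
qed

definition pick_kernel :: "complex \<Rightarrow> real \<Rightarrow> complex" where
  "pick_kernel z t = 1 / (of_real t - z) - of_real (t / (t\<^sup>2 + 1))"

lemma borel_measurable_pick_kernel [measurable]: "pick_kernel z \<in> borel_measurable borel"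
  unfolding pick_kernel_def by measurable

lemma Im_pick_kernel_nonneg: "Im z \<ge> 0 \<Longrightarrow> Im (pick_kernel z t) \<ge> 0"
  by (simp add: pick_kernel_def Im_divide cmod_power2)

lemma norm_pick_kernel_le_on_zero_interval:
  assumes "r \<le> 0" "s \<ge> 0" "Im z > 0" "t \<in> zero_interval s r"
  shows "norm (pick_kernel z t) \<le> ((s + norm z) * (norm z + Im z) / Im z + (s + 1)) * r\<^sup>2"
proof -
  have "pick_kernel z t = (1 / (of_real t - z) - of_real r) - of_real (t / (t\<^sup>2 + 1) - r)"
    by (simp add: pick_kernel_def)
  hence "norm (pick_kernel z t) \<le> norm (1 / (of_real t - z) - of_real r) +
                                    norm (of_real (t / (t\<^sup>2 + 1) - r) :: complex)"
    by (simp only: norm_triangle_ineq4)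
  also have "\<dots> = norm (1 / (of_real t - z) - of_real r) + \<bar>t / (t\<^sup>2 + 1) - r\<bar>"
    by (simp only: norm_of_real)
  also have "\<dots> \<le> (s + norm z) * (norm z + Im z) / Im z * r\<^sup>2 + (s + 1) * r\<^sup>2"
    using norm_factor_integrand_le[OF assms(1,4) order_refl assms(3) Im_le_norm_real_minus]
      abs_cauchy_kernel_correction_le[OF assms(1,2,4)]
    by (rule add_mono)
  finally show ?thesis by (simp add: algebra_simps)
qed

lemma norm_pick_kernel_imag_div_le:
  assumes "y \<ge> 1"
  shows "norm (pick_kernel (\<i> * of_real y) t / (\<i> * of_real y)) \<le> 1 / (1 + t\<^sup>2)"
proof -
  define z where "z = \<i> * of_real y"
  have nz: "of_real t - z \<noteq> 0" using assms by (auto simp: z_def complex_eq_iff)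
  hence d: "norm (of_real t - z) \<noteq> 0" by simp
  have z_norm: "norm z = y" using assms by (simp add: z_def norm_mult)
  have "(of_real t)\<^sup>2 + 1 = (of_real (t\<^sup>2 + 1) :: complex)" by simp
  hence "(of_real t)\<^sup>2 + 1 \<noteq> (0::complex)"
    using square_plus_1_pos[of t] by (simp only: of_real_eq_0_iff)
  hence "pick_kernel z t = (1 + of_real t * z) / ((of_real t - z) * of_real (t\<^sup>2 + 1))"
    using nz unfolding pick_kernel_def
    by (simp add: divide_simps) (simp add: algebra_simps power2_eq_square)
  hence "norm (pick_kernel z t / z) =
           norm (1 + of_real t * z) / (norm (of_real t - z) * \<bar>t\<^sup>2 + 1\<bar> * norm z)"
    by (simp only: norm_divide norm_mult norm_of_real divide_divide_eq_left)
  also have "\<dots> = norm (1 + of_real t * z) / (y * norm (of_real t - z) * (t\<^sup>2 + 1))"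
    using assms by (simp only: z_norm abs_of_pos[OF square_plus_1_pos] mult_ac)
  also have "\<dots> \<le> y * norm (of_real t - z) / (y * norm (of_real t - z) * (t\<^sup>2 + 1))"
  proof (rule divide_right_mono)
    have "(norm (1 + of_real t * z))\<^sup>2 = 1 + t\<^sup>2 * y\<^sup>2"
      by (simp add: z_def cmod_power2 power_mult_distrib)
    also have "\<dots> \<le> y\<^sup>2 * (t\<^sup>2 + y\<^sup>2)"
      using assms mult_mono[of 1 "y\<^sup>2" 1 "y\<^sup>2"] by (simp add: algebra_simps one_le_power)
    also have "\<dots> = (y * norm (of_real t - z))\<^sup>2"
      by (simp add: z_def cmod_power2 power_mult_distrib)
    finally show "norm (1 + of_real t * z) \<le> y * norm (of_real t - z)"
      by (rule power2_le_imp_le) (use assms in simp)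
  qed (use assms square_plus_1_pos[of t] in simp)
  also have "\<dots> = 1 / (1 + t\<^sup>2)"
    using d assms by (subst nonzero_divide_mult_cancel_left) (simp_all add: add.commute)
  finally show ?thesis by (simp add: z_def)
qed

lemma pick_kernel_imag_div_tendsto_0:
  "((\<lambda>y. pick_kernel (\<i> * of_real y) t / (\<i> * of_real y)) \<longlongrightarrow> 0) at_top"
proof (rule Lim_null_comparison)
  show "eventually (\<lambda>y. norm (pick_kernel (\<i> * of_real y) t / (\<i> * of_real y)) \<le> 2 / y) at_top"
    using eventually_ge_at_top[of "1::real"]
  proof eventually_elim
    case (elim y)
    have "1 \<le> norm (of_real t - \<i> * of_real y)"
      using elim Im_le_norm_real_minus[of "\<i> * of_real y" t] by simp
    hence "norm (1 / (of_real t - \<i> * of_real y)) \<le> 1"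
      by (simp add: norm_divide divide_le_eq)
    moreover have "\<bar>t / (t\<^sup>2 + 1)\<bar> \<le> 1"
      using abs_le_square_plus_1[of t] by (simp add: abs_divide divide_le_eq add_pos_nonneg)
    hence "norm (of_real (t / (t\<^sup>2 + 1)) :: complex) \<le> 1" by (simp only: norm_of_real)
    ultimately have "norm (pick_kernel (\<i> * of_real y) t) \<le> 2"
      unfolding pick_kernel_def by (smt (verit) norm_triangle_ineq4)
    thus ?case using elim by (simp add: norm_divide norm_mult divide_right_mono)
  qed
  show "((\<lambda>y::real. 2 / y) \<longlongrightarrow> 0) at_top"
    by (intro tendsto_divide_0[OF tendsto_const] filterlim_at_top_imp_at_infinity filterlim_ident)
qed

lemma filterlim_imag_at_infinity: "filterlim (\<lambda>y::real. \<i> * of_real y) at_infinity at_top"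
  unfolding filterlim_at_infinity_conv_norm_at_top
  by (rule filterlim_cong[THEN iffD2, OF refl refl _ filterlim_ident])
     (auto intro: eventually_mono[OF eventually_gt_at_top[of "0::real"]] simp: norm_mult)

lemma holomorphic_on_shift_difference:
  assumes "L holomorphic_on cut_plane" "s \<ge> 0"
  shows "(\<lambda>z. L z - L (z + of_real s)) holomorphic_on upper_half_plane"
proof -
  have "(L \<circ> (\<lambda>z. z + of_real s)) holomorphic_on upper_half_plane"
    by (rule holomorphic_on_compose_gen[OF _ assms(1)])
       (use assms(2) in \<open>auto simp: upper_half_plane_def mem_cut_plane_iff intro!: holomorphic_intros\<close>)
  moreover have "L holomorphic_on upper_half_plane"
    by (rule holomorphic_on_subset[OF assms(1)]) (auto simp: upper_half_plane_def mem_cut_plane_iff)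
  ultimately show ?thesis by (simp add: o_def holomorphic_on_diff)
qed

text \<open>r n = 1/a n, where a n are the zeros of f; r n = 0 stands for no zero (finitely many zeros).\<close>

locale genus_one_zeros =
  fixes r :: "nat \<Rightarrow> real" and s :: real
  assumes r_nonpos: "r n \<le> 0"
    and summable_r_square: "summable (\<lambda>n. r n ^ 2)"
    and s_pos: "s > 0"
begin

abbreviation J :: "nat \<Rightarrow> real set" where
  "J n \<equiv> zero_interval s (r n)"

abbreviation T :: "nat \<Rightarrow> complex \<Rightarrow> complex" where
  "T n \<equiv> factor_log_quotient s (r n)"

lemma r_tendsto_0: "r \<longlonglongrightarrow> 0"
proof -
  have "(\<lambda>n. sqrt (r n ^ 2)) \<longlonglongrightarrow> sqrt 0"
    by (intro tendsto_real_sqrt summable_LIMSEQ_zero[OF summable_r_square])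
  thus ?thesis by (simp add: tendsto_rabs_zero_iff)
qed

lemma eventually_not_mem_J: "eventually (\<lambda>n. t \<notin> J n) sequentially"
proof -
  have "(\<lambda>n. \<bar>r n\<bar>) \<longlonglongrightarrow> 0" using r_tendsto_0 by (simp add: tendsto_rabs_zero_iff)
  hence "eventually (\<lambda>n. \<bar>r n\<bar> < 1 / (\<bar>t\<bar> + 1)) sequentially"
    by (rule order_tendstoD) simp
  thus ?thesis
  proof eventually_elim
    case (elim n)
    show "t \<notin> J n"
    proof
      assume t: "t \<in> J n"
      have "1 / (\<bar>t\<bar> + 1) < 1 / \<bar>t\<bar>"
        using mem_zero_interval_D(4)[OF r_nonpos t] by (intro frac_less2) auto
      thus False using elim inverse_abs_le_on_zero_interval[OF r_nonpos t] by linarith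
    qed
  qed
qed

lemma norm_T_locally_bounded:
  assumes "z0 \<in> cut_plane"
  obtains \<epsilon> C where "\<epsilon> > 0" "ball z0 \<epsilon> \<subseteq> cut_plane"
    "\<And>n z. z \<in> ball z0 \<epsilon> \<Longrightarrow> norm (T n z) \<le> C * r n ^ 2"
proof -
  obtain \<epsilon> where \<epsilon>: "\<epsilon> > 0" "\<And>z t. z \<in> ball z0 \<epsilon> \<Longrightarrow> t \<le> 0 \<Longrightarrow> \<epsilon> \<le> norm (of_real t - z)"
    using cut_plane_locally_away_from_cut[OF assms] by blast
  have sub: "ball z0 \<epsilon> \<subseteq> cut_plane"
  proof
    fix z assume z: "z \<in> ball z0 \<epsilon>"
    have "z \<noteq> of_real t" if "t \<le> 0" for t using \<epsilon>(1) \<epsilon>(2)[OF z that] by auto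
    thus "z \<in> cut_plane" by (auto simp: cut_plane_def)
  qed
  define R where "R = norm z0 + \<epsilon>"
  show thesis
  proof (rule that[OF \<epsilon>(1) sub])
    fix n z assume z: "z \<in> ball z0 \<epsilon>"
    have "norm z \<le> R"
      using z norm_triangle_ineq2[of z z0] by (simp add: R_def dist_norm norm_minus_commute)
    thus "norm (T n z) \<le> s * ((s + R) * (R + \<epsilon>) / \<epsilon>) * r n ^ 2"
      using norm_factor_log_quotient_le[OF r_nonpos _ _ _ \<epsilon>(1) \<epsilon>(2)[OF z]] sub z s_pos
      by auto
  qed
qed

lemma summable_norm_T:
  assumes "z \<in> cut_plane"
  shows "summable (\<lambda>n. norm (T n z))"
proof -
  obtain \<epsilon> C where "\<epsilon> > 0" "\<And>n w. w \<in> ball z \<epsilon> \<Longrightarrow> norm (T n w) \<le> C * r n ^ 2"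
    using norm_T_locally_bounded[OF assms] by metis
  thus ?thesis
    by (intro summable_comparison_test'[OF summable_mult[OF summable_r_square, of C]]) auto
qed

lemma continuous_on_suminf_T: "continuous_on cut_plane (\<lambda>z. \<Sum>n. T n z)"
proof -
  have cont_ball: "continuous_on (ball z0 \<epsilon>) (\<lambda>z. \<Sum>n. T n z)"
    if "\<epsilon> > 0" "ball z0 \<epsilon> \<subseteq> cut_plane" "\<And>n z. z \<in> ball z0 \<epsilon> \<Longrightarrow> norm (T n z) \<le> C * r n ^ 2"
    for z0 \<epsilon> C
  proof (rule uniform_limit_theorem[OF _ Weierstrass_m_test])
    show "summable (\<lambda>n. C * r n ^ 2)" by (rule summable_mult[OF summable_r_square])
    show "\<forall>\<^sub>F n in sequentially. continuous_on (ball z0 \<epsilon>) (\<lambda>z. \<Sum>i<n. T i z)"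
      using that(2) s_pos
      by (intro always_eventually allI continuous_on_sum continuous_on_subset
            [OF continuous_on_factor_log_quotient[OF r_nonpos]]) auto
  qed (use that in auto)
  have "isCont (\<lambda>z. \<Sum>n. T n z) z0" if z0: "z0 \<in> cut_plane" for z0
  proof -
    obtain \<epsilon> C where bounded: "\<epsilon> > 0" "ball z0 \<epsilon> \<subseteq> cut_plane"
      "\<And>n z. z \<in> ball z0 \<epsilon> \<Longrightarrow> norm (T n z) \<le> C * r n ^ 2"
      using norm_T_locally_bounded[OF z0] by blast
    have "\<forall>x\<in>ball z0 \<epsilon>. isCont (\<lambda>z. \<Sum>n. T n z) x"
      using cont_ball[OF bounded] by (simp add: continuous_on_eq_continuous_at)
    thus ?thesis using bounded(1) by simp
  qed
  thus ?thesis by (blast intro: continuous_at_imp_continuous_on)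
qed

lemma prod_weierstrass_factor_shift:
  assumes "z \<in> cut_plane"
  shows "(\<Prod>n. weierstrass_factor 1 (z * of_real (r n))) =
           (\<Prod>n. weierstrass_factor 1 ((z + of_real s) * of_real (r n))) * exp (\<Sum>n. T n z)"
proof -
  have "(\<lambda>n. T n z) sums (\<Sum>n. T n z)"
    by (rule summable_sums[OF summable_norm_cancel[OF summable_norm_T[OF assms]]])
  hence "(\<lambda>n. exp (T n z)) has_prod exp (\<Sum>n. T n z)"
    unfolding has_prod_def by (intro disjI1 sums_imp_has_prod_exp)
  moreover have "(\<lambda>n. weierstrass_factor 1 ((z + of_real s) * of_real (r n))) has_prod
                   (\<Prod>n. weierstrass_factor 1 ((z + of_real s) * of_real (r n)))"
    using summable_r_square
    by (intro convergent_prod_has_prod convergent_prod_weierstrass_factor_1) simp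
  ultimately have "(\<lambda>n. weierstrass_factor 1 ((z + of_real s) * of_real (r n)) * exp (T n z))
      has_prod ((\<Prod>n. weierstrass_factor 1 ((z + of_real s) * of_real (r n))) * exp (\<Sum>n. T n z))"
    by (rule has_prod_mult[rotated])
  moreover have "(\<lambda>n. weierstrass_factor 1 (z * of_real (r n))) =
                   (\<lambda>n. weierstrass_factor 1 ((z + of_real s) * of_real (r n)) * exp (T n z))"
    by (rule ext) (rule weierstrass_factor_1_shift[OF r_nonpos less_imp_le[OF s_pos] assms])
  ultimately have "(\<lambda>n. weierstrass_factor 1 (z * of_real (r n))) has_prod
      ((\<Prod>n. weierstrass_factor 1 ((z + of_real s) * of_real (r n))) * exp (\<Sum>n. T n z))"
    by simp
  thus ?thesis by (rule has_prod_unique[symmetric])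
qed

lemma Im_suminf_T_of_real: "x > 0 \<Longrightarrow> Im (\<Sum>n. T n (of_real x)) = 0"
  using summable_norm_cancel[OF summable_norm_T[of "of_real x"]] s_pos
  by (simp add: Im_suminf mem_cut_plane_iff Im_factor_log_quotient_of_real[OF r_nonpos])

definition cover_count :: "real \<Rightarrow> real" where
  "cover_count t = (\<Sum>n. indicator (J n) t)"

definition interval_measure :: "real measure" where
  "interval_measure = density lborel (\<lambda>t. ennreal (cover_count t))"

lemma summable_indicator_J: "summable (\<lambda>n. indicator (J n) t :: real)"
  using eventually_not_mem_J[of t]
  by (intro summable_comparison_test_ev[OF _ summable_zero]) (auto elim: eventually_mono)

lemma cover_count_nonneg: "cover_count t \<ge> 0"
  unfolding cover_count_def by (intro suminf_nonneg summable_indicator_J) auto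

lemma borel_measurable_cover_count [measurable]: "cover_count \<in> borel_measurable borel"
  unfolding cover_count_def zero_interval_def by measurable

lemma sets_interval_measure [simp]: "sets interval_measure = sets borel"
  by (simp add: interval_measure_def)

lemma set_integrable_J_norm_integral_le:
  fixes f :: "real \<Rightarrow> 'b::{banach, second_countable_topology}"
  assumes [measurable]: "f \<in> borel_measurable borel" and C: "C \<ge> 0"
    and bound: "\<And>t. t \<in> J n \<Longrightarrow> norm (f t) \<le> C * r n ^ 2"
  shows "set_integrable lborel (J n) f"
    "(\<integral>t. norm (indicator (J n) t *\<^sub>R f t) \<partial>lborel) \<le> C * s * r n ^ 2"
proof -
  have [measurable]: "J n \<in> sets borel" by (simp add: zero_interval_def)
  have le: "norm (indicator (J n) t *\<^sub>R f t) \<le> C * r n ^ 2 * indicator (J n) t" for t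
    using bound[of t] by (auto simp: indicator_def)
  have majorant: "integrable lborel (\<lambda>t. C * r n ^ 2 * indicator (J n) t :: real)"
    by (intro integrable_mult_right integrable_real_indicator)
       (auto simp: zero_interval_def emeasure_lborel_Icc_eq)
  show "set_integrable lborel (J n) f"
    unfolding set_integrable_def
    by (rule Bochner_Integration.integrable_bound[OF majorant])
       (use le C in \<open>auto intro!: AE_I2 order_trans[OF le]\<close>)
  have "(\<integral>t. norm (indicator (J n) t *\<^sub>R f t) \<partial>lborel)
          \<le> (\<integral>t. C * r n ^ 2 * indicator (J n) t \<partial>lborel)"
    by (rule integral_mono'[OF majorant]) (use le C in auto)
  also have "\<dots> = C * r n ^ 2 * measure lborel (J n)" by simp
  also have "\<dots> \<le> C * r n ^ 2 * s"
    using C s_pos by (intro mult_left_mono) (auto simp: zero_interval_def)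
  finally show "(\<integral>t. norm (indicator (J n) t *\<^sub>R f t) \<partial>lborel) \<le> C * s * r n ^ 2"
    by (simp add: mult_ac)
qed

lemma integral_interval_measure_sums:
  fixes f :: "real \<Rightarrow> 'b::{banach, second_countable_topology}"
  assumes [measurable]: "f \<in> borel_measurable borel" and C: "C \<ge> 0"
    and bound: "\<And>n t. t \<in> J n \<Longrightarrow> norm (f t) \<le> C * r n ^ 2"
  shows "integrable interval_measure f"
    "(\<lambda>n. LINT t:J n|lborel. f t) sums (\<integral>t. f t \<partial>interval_measure)"
proof -
  define F where "F n = (\<lambda>t. indicator (J n) t *\<^sub>R f t)" for n
  note J_bounds = set_integrable_J_norm_integral_le[OF assms(1) C bound]
  have F_int: "integrable lborel (F n)" for n
    using J_bounds(1) by (simp add: set_integrable_def F_def)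
  have summable_int: "summable (\<lambda>n. \<integral>t. norm (F n t) \<partial>lborel)"
    using J_bounds(2)
    by (intro summable_comparison_test'[OF summable_mult[OF summable_r_square]])
       (auto simp: F_def integral_nonneg_AE)
  have summable_F: "AE t in lborel. summable (\<lambda>n. norm (F n t))"
    by (intro AE_I2) (simp add: F_def summable_mult2[OF summable_indicator_J])
  have sum_F: "(\<Sum>n. F n t) = cover_count t *\<^sub>R f t" for t
    unfolding F_def cover_count_def by (rule suminf_scaleR_left[OF summable_indicator_J, symmetric])
  have "integrable lborel (\<lambda>t. cover_count t *\<^sub>R f t)"
    using integrable_suminf[OF F_int summable_F summable_int] by (simp add: sum_F)
  thus "integrable interval_measure f"
    unfolding interval_measure_def by (subst integrable_density) (auto simp: cover_count_nonneg)
  have "(\<lambda>n. integral\<^sup>L lborel (F n)) sums (\<integral>t. (\<Sum>n. F n t) \<partial>lborel)"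
    by (rule sums_integral[OF F_int summable_F summable_int])
  also have "(\<integral>t. (\<Sum>n. F n t) \<partial>lborel) = (\<integral>t. f t \<partial>interval_measure)"
    unfolding interval_measure_def
    by (subst integral_density) (auto simp: sum_F cover_count_nonneg)
  finally show "(\<lambda>n. LINT t:J n|lborel. f t) sums (\<integral>t. f t \<partial>interval_measure)"
    by (simp add: F_def set_lebesgue_integral_def)
qed

lemma emeasure_interval_measure_pos: "emeasure interval_measure {0<..} = 0"
proof -
  have "cover_count t = 0" if "t > 0" for t
  proof -
    have "indicator (J n) t = (0::real)" for n
      using mem_zero_interval_D(4)[OF r_nonpos, of t s n] that by (auto simp: indicator_def)
    thus ?thesis by (simp add: cover_count_def)
  qed
  hence "(\<lambda>t. ennreal (cover_count t) * indicator {0<..} t) = (\<lambda>_. 0)"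
    by (auto simp: fun_eq_iff indicator_def)
  thus ?thesis unfolding interval_measure_def by (subst emeasure_density) auto
qed

lemma integrable_interval_measure_weight:
  "integrable interval_measure (\<lambda>t. 1 / (1 + t\<^sup>2))"
proof (rule integral_interval_measure_sums(1)[where C = 1])
  fix n t assume "t \<in> J n"
  from weight_le_on_zero_interval[OF r_nonpos this]
  show "norm (1 / (1 + t\<^sup>2)) \<le> 1 * r n ^ 2"
    using square_plus_1_pos[of t] by (simp add: add.commute)
qed simp_all

lemma pick_kernel_integral_sums:
  assumes "Im z > 0"
  shows "set_integrable lborel (J n) (pick_kernel z)"
    "integrable interval_measure (pick_kernel z)"
    "(\<lambda>n. LINT t:J n|lborel. pick_kernel z t) sums (\<integral>t. pick_kernel z t \<partial>interval_measure)"
proof -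
  have C: "0 \<le> (s + norm z) * (norm z + Im z) / Im z + (s + 1)"
    using assms s_pos by (intro add_nonneg_nonneg divide_nonneg_nonneg mult_nonneg_nonneg) auto
  note bound = norm_pick_kernel_le_on_zero_interval[OF r_nonpos less_imp_le[OF s_pos] assms]
  from set_integrable_J_norm_integral_le(1)[OF borel_measurable_pick_kernel C bound]
    integral_interval_measure_sums[OF borel_measurable_pick_kernel C bound]
  show "set_integrable lborel (J n) (pick_kernel z)"
    "integrable interval_measure (pick_kernel z)"
    "(\<lambda>n. LINT t:J n|lborel. pick_kernel z t) sums (\<integral>t. pick_kernel z t \<partial>interval_measure)"
    by blast+
qed

lemma T_eq_set_integral_pick_kernel:
  assumes "Im z > 0"
  shows "T n z = (LINT t:J n|lborel. pick_kernel z t) +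
                 of_real (integral (J n) (\<lambda>t. t / (t\<^sup>2 + 1) - r n))"
proof -
  have "z \<in> cut_plane" using assms by (simp add: mem_cut_plane_iff)
  have "(\<lambda>t. t / (t\<^sup>2 + 1) - r n) integrable_on J n"
    using square_plus_1_pos[THEN dual_order.strict_implies_not_eq]
    by (auto simp: zero_interval_def intro!: integrable_continuous_interval continuous_intros)
  hence "((\<lambda>t. t / (t\<^sup>2 + 1) - r n) has_integral integral (J n) (\<lambda>t. t / (t\<^sup>2 + 1) - r n)) (J n)"
    by (rule integrable_integral)
  from has_integral_linear[OF this bounded_linear_of_real]
  have "((\<lambda>t. of_real (t / (t\<^sup>2 + 1) - r n)) has_integral
           (of_real (integral (J n) (\<lambda>t. t / (t\<^sup>2 + 1) - r n)) :: complex)) (J n)"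
    unfolding o_def .
  moreover have "(pick_kernel z has_integral (LINT t:J n|lborel. pick_kernel z t)) (J n)"
    using set_borel_integral_eq_integral[OF pick_kernel_integral_sums(1)[OF assms]]
    by (simp add: has_integral_integral)
  ultimately have "((\<lambda>t. pick_kernel z t + of_real (t / (t\<^sup>2 + 1) - r n)) has_integral
      (LINT t:J n|lborel. pick_kernel z t) + of_real (integral (J n) (\<lambda>t. t / (t\<^sup>2 + 1) - r n))) (J n)"
    by (rule has_integral_add[rotated])
  moreover have "(\<lambda>t. pick_kernel z t + of_real (t / (t\<^sup>2 + 1) - r n)) =
                   (\<lambda>t. 1 / (of_real t - z) - of_real (r n))"
    by (simp add: pick_kernel_def fun_eq_iff)
  ultimately have "((\<lambda>t. 1 / (of_real t - z) - of_real (r n)) has_integral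
      (LINT t:J n|lborel. pick_kernel z t) + of_real (integral (J n) (\<lambda>t. t / (t\<^sup>2 + 1) - r n))) (J n)"
    by simp
  with has_integral_factor_log_quotient[OF r_nonpos less_imp_le[OF s_pos] \<open>z \<in> cut_plane\<close>]
  show ?thesis by (rule has_integral_unique)
qed

lemma suminf_T_eq_integral_pick_kernel:
  obtains c :: real
  where "\<And>z. Im z > 0 \<Longrightarrow> (\<Sum>n. T n z) = (\<integral>t. pick_kernel z t \<partial>interval_measure) + of_real c"
proof -
  define c where "c n = integral (J n) (\<lambda>t. t / (t\<^sup>2 + 1) - r n)" for n
  have "(\<Sum>n. T n z) = (\<integral>t. pick_kernel z t \<partial>interval_measure) + of_real (suminf c)"
    if z: "Im z > 0" for z
  proof -
    have "z \<in> cut_plane" using z by (simp add: mem_cut_plane_iff)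
    hence "(\<lambda>n. T n z) sums (\<Sum>n. T n z)"
      by (rule summable_sums[OF summable_norm_cancel[OF summable_norm_T]])
    from sums_diff[OF this pick_kernel_integral_sums(3)[OF z]]
    have sums_c: "(\<lambda>n. of_real (c n)) sums
                    ((\<Sum>n. T n z) - (\<integral>t. pick_kernel z t \<partial>interval_measure))"
      by (simp add: T_eq_set_integral_pick_kernel[OF z] c_def)
    have "summable c" using sums_summable[OF sums_Re[OF sums_c]] by simp
    hence "(\<lambda>n. of_real (c n)) sums (of_real (suminf c) :: complex)"
      by (intro sums_of_real summable_sums)
    hence "(\<Sum>n. T n z) - (\<integral>t. pick_kernel z t \<partial>interval_measure) = of_real (suminf c)"
      by (rule sums_unique2[OF sums_c])
    thus ?thesis by (simp add: diff_eq_eq add.commute)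
  qed
  thus thesis by (rule that)
qed

lemma Im_integral_pick_kernel_nonneg:
  assumes "Im z > 0"
  shows "Im (\<integral>t. pick_kernel z t \<partial>interval_measure) \<ge> 0"
proof -
  have "Im (\<integral>t. pick_kernel z t \<partial>interval_measure) = (\<integral>t. Im (pick_kernel z t) \<partial>interval_measure)"
    by (rule integral_Im[OF pick_kernel_integral_sums(2)[OF assms], symmetric])
  also have "\<dots> \<ge> 0"
    using assms by (intro integral_nonneg_AE AE_I2 Im_pick_kernel_nonneg) simp
  finally show ?thesis .
qed

lemma integral_pick_kernel_imag_div_tendsto_0:
  "((\<lambda>y. (\<integral>t. pick_kernel (\<i> * of_real y) t \<partial>interval_measure) / (\<i> * of_real y)) \<longlongrightarrow> 0) at_top"
proof -
  have "((\<lambda>y. \<integral>t. pick_kernel (\<i> * of_real y) t / (\<i> * of_real y) \<partial>interval_measure)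
          \<longlongrightarrow> (\<integral>t. 0 \<partial>interval_measure)) at_top"
  proof (rule integral_dominated_convergence_at_top[where w = "\<lambda>t. 1 / (1 + t\<^sup>2)"])
    show "(\<lambda>t. pick_kernel (\<i> * of_real y) t / (\<i> * of_real y)) \<in> borel_measurable interval_measure"
      for y by (simp add: measurable_cong_sets[OF sets_interval_measure refl])
    show "\<forall>\<^sub>F y in at_top. AE t in interval_measure.
            norm (pick_kernel (\<i> * of_real y) t / (\<i> * of_real y)) \<le> 1 / (1 + t\<^sup>2)"
      using eventually_ge_at_top[of "1::real"]
      by eventually_elim (intro AE_I2 norm_pick_kernel_imag_div_le)
  qed (simp_all add: integrable_interval_measure_weight pick_kernel_imag_div_tendsto_0)
  thus ?thesis by simp
qed

lemma imag_div_tendsto_0_of_representation: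
  assumes "\<And>z. Im z > 0 \<Longrightarrow> h z = of_real \<beta> + (\<integral>t. pick_kernel z t \<partial>interval_measure)"
  shows "((\<lambda>y. h (\<i> * of_real y) / (\<i> * of_real y)) \<longlongrightarrow> 0) at_top"
proof -
  have "eventually (\<lambda>y. (of_real \<beta> + (\<integral>t. pick_kernel (\<i> * of_real y) t \<partial>interval_measure)) /
          (\<i> * of_real y) = h (\<i> * of_real y) / (\<i> * of_real y)) at_top"
    using eventually_gt_at_top[of 0] by eventually_elim (simp add: assms)
  moreover have "((\<lambda>y. (of_real \<beta> + (\<integral>t. pick_kernel (\<i> * of_real y) t \<partial>interval_measure)) /
                    (\<i> * of_real y)) \<longlongrightarrow> 0) at_top"
    using tendsto_add[OF tendsto_divide_0[OF tendsto_const filterlim_imag_at_infinity]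
        integral_pick_kernel_imag_div_tendsto_0]
    by (simp add: add_divide_distrib)
  ultimately show ?thesis by (rule tendsto_cong[THEN iffD1])
qed

lemma pick_representing_measure_interval_measure:
  assumes "\<And>z. Im z > 0 \<Longrightarrow> h z = of_real \<beta> + (\<integral>t. pick_kernel z t \<partial>interval_measure)"
  shows "pick_representing_measure h interval_measure"
  unfolding pick_representing_measure_def
proof (intro conjI)
  have "(\<integral>\<^sup>+ t. ennreal (norm (1 / (1 + t\<^sup>2))) \<partial>interval_measure) < \<infinity>"
    using integrable_interval_measure_weight by (simp add: integrable_iff_bounded)
  thus "(\<integral>\<^sup>+ t. ennreal (1 / (1 + t\<^sup>2)) \<partial>interval_measure) < \<infinity>"
    by (simp add: add_nonneg_pos)
  show "\<exists>\<alpha> \<beta>. 0 \<le> \<alpha> \<and> (\<forall>z\<in>upper_half_plane. h z = of_real \<alpha> * z + of_real \<beta> +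
          (\<integral>t. (1 / (of_real t - z) - of_real (t / (t\<^sup>2 + 1))) \<partial>interval_measure))"
    using assms by (intro exI[of _ 0] exI[of _ \<beta>]) (auto simp: upper_half_plane_def pick_kernel_def)
qed simp

lemma exp_log_quotient_minus_suminf_T:
  fixes g :: "complex poly" and L :: "complex \<Rightarrow> complex"
  assumes deg: "degree g \<le> 1"
    and L_exp: "\<And>z. z \<in> cut_plane \<Longrightarrow>
                  exp (L z) = exp (poly g z) * (\<Prod>n. weierstrass_factor 1 (z * of_real (r n)))"
    and z: "z \<in> cut_plane"
  shows "exp (L z - L (z + of_real s) - (\<Sum>n. T n z)) = exp (- (coeff g 1 * of_real s))"
proof -
  define P where "P = (\<Prod>n. weierstrass_factor 1 ((z + of_real s) * of_real (r n)))"
  have e1: "exp (L z) = exp (poly g z) * P * exp (\<Sum>n. T n z)"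
    using L_exp[OF z] prod_weierstrass_factor_shift[OF z] by (simp add: P_def mult_ac)
  have "z + of_real s \<in> cut_plane" using cut_plane_add_nonneg[OF z] s_pos by simp
  hence e2: "exp (L (z + of_real s)) = exp (poly g (z + of_real s)) * P"
    using L_exp by (simp add: P_def)
  have "P \<noteq> 0" using e2 by (metis exp_not_eq_zero mult_zero_right)
  hence "exp (L z - L (z + of_real s) - (\<Sum>n. T n z)) = exp (poly g z) / exp (poly g (z + of_real s))"
    by (simp add: exp_diff e1 e2)
  also have "\<dots> = exp (- (coeff g 1 * of_real s))"
    by (simp add: poly_degree_le_1[OF deg] algebra_simps flip: exp_diff)
  finally show ?thesis .
qed

lemma log_quotient_representation:
  fixes g :: "complex poly" and L :: "complex \<Rightarrow> complex"
  assumes deg: "degree g \<le> 1" and L_cont: "continuous_on cut_plane L"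
    and L_exp: "\<And>z. z \<in> cut_plane \<Longrightarrow>
                  exp (L z) = exp (poly g z) * (\<Prod>n. weierstrass_factor 1 (z * of_real (r n)))"
    and L_real: "\<And>x. x > 0 \<Longrightarrow> L (of_real x) \<in> \<real>"
  obtains \<beta> :: real where "\<And>z. Im z > 0 \<Longrightarrow>
    L z - L (z + of_real s) = of_real \<beta> + (\<integral>t. pick_kernel z t \<partial>interval_measure)"
proof -
  define q where "q z = L z - L (z + of_real s) - (\<Sum>n. T n z)" for z
  have shift: "z + of_real s \<in> cut_plane" if "z \<in> cut_plane" for z
    using cut_plane_add_nonneg[OF that] s_pos by simp
  have "exp (q z) = exp (- (coeff g 1 * of_real s))" if "z \<in> cut_plane" for z
    unfolding q_def by (rule exp_log_quotient_minus_suminf_T[OF deg L_exp that])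
  moreover have "continuous_on cut_plane q"
    unfolding q_def using shift
    by (intro continuous_intros continuous_on_suminf_T L_cont
          continuous_on_compose2[OF L_cont, of _ "\<lambda>z. z + of_real s"]) auto
  ultimately obtain \<kappa> where \<kappa>: "\<And>z. z \<in> cut_plane \<Longrightarrow> q z = \<kappa>"
    using continuous_exp_constant_imp_constant_on[OF connected_cut_plane]
    unfolding constant_on_def by metis
  have "Im \<kappa> = 0"
  proof -
    have "Im (L 1) = 0" "Im (L (1 + of_real s)) = 0"
      using L_real[of 1] L_real[of "1 + s"] s_pos by (auto simp: complex_is_Real_iff)
    moreover have "(1::complex) \<in> cut_plane" by (simp add: mem_cut_plane_iff)
    ultimately show ?thesis using \<kappa> Im_suminf_T_of_real[of 1] by (force simp: q_def)
  qed
  hence \<kappa>_real: "\<kappa> = of_real (Re \<kappa>)" by (simp add: complex_eq_iff)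
  obtain c :: real where
    c: "\<And>z. Im z > 0 \<Longrightarrow> (\<Sum>n. T n z) = (\<integral>t. pick_kernel z t \<partial>interval_measure) + of_real c"
    using suminf_T_eq_integral_pick_kernel by blast
  show thesis
  proof (rule that[of "Re \<kappa> + c"])
    fix z :: complex assume z: "Im z > 0"
    hence "q z = \<kappa>" using \<kappa> by (simp add: mem_cut_plane_iff)
    thus "L z - L (z + of_real s) = of_real (Re \<kappa> + c) + (\<integral>t. pick_kernel z t \<partial>interval_measure)"
      using c[OF z] \<kappa>_real by (simp add: q_def algebra_simps)
  qed
qed

end

theorem proposition4p9:
  fixes f :: "complex \<Rightarrow> complex" and L :: "complex \<Rightarrow> complex" and s :: real
  assumes entire: "f holomorphic_on UNIV"
    and real_fun: "\<forall>x::real. f (of_real x) \<in> \<real>"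
    and genus: "has_genus f 1"
    and neg_zeros: "\<forall>z. f z = 0 \<longrightarrow> z \<in> \<real> \<and> Re z < 0"
    and f0: "f 0 \<in> \<real>" "Re (f 0) > 0"
    and L_holo: "L holomorphic_on cut_plane"
    and L_exp: "\<forall>z\<in>cut_plane. exp (L z) = f z"
    and L_real: "\<forall>x::real. x > 0 \<longrightarrow> L (of_real x) \<in> \<real>"
    and s_pos: "s > 0"
  shows "pick_function (\<lambda>z. L z - L (z + of_real s)) \<and>
         (\<exists>\<mu>. pick_representing_measure (\<lambda>z. L z - L (z + of_real s)) \<mu> \<and>
              emeasure \<mu> {0<..} = 0) \<and>
         ((\<lambda>y::real. (L (\<i> * of_real y) - L (\<i> * of_real y + of_real s)) / (\<i> * of_real y))
            \<longlongrightarrow> 0) at_top"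
proof -
  have "f 0 \<noteq> 0" using f0 by auto
  then obtain g r where deg: "degree g \<le> 1" and r: "\<And>n. r n \<le> 0" "summable (\<lambda>n. r n ^ 2)"
    and f: "\<And>z. f z = exp (poly g z) * (\<Prod>n. weierstrass_factor 1 (z * of_real (r n)))"
    using genus_one_nonpos_zeros_factorization[OF genus] neg_zeros by metis
  interpret genus_one_zeros r s using r s_pos by unfold_locales
  obtain \<beta> where repr: "\<And>z. Im z > 0 \<Longrightarrow>
      L z - L (z + of_real s) = of_real \<beta> + (\<integral>t. pick_kernel z t \<partial>interval_measure)"
    using log_quotient_representation[OF deg holomorphic_on_imp_continuous_on[OF L_holo]]
      L_exp L_real f by metis
  have "pick_function (\<lambda>z. L z - L (z + of_real s))"
    using holomorphic_on_shift_difference[OF L_holo less_imp_le[OF s_pos]]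
      repr Im_integral_pick_kernel_nonneg
    by (auto simp: pick_function_def upper_half_plane_def)
  moreover have "((\<lambda>y. (L (\<i> * of_real y) - L (\<i> * of_real y + of_real s)) / (\<i> * of_real y))
                   \<longlongrightarrow> 0) at_top"
    using imag_div_tendsto_0_of_representation[OF repr] by simp
  ultimately show ?thesis
    using pick_representing_measure_interval_measure[OF repr] emeasure_interval_measure_pos
    by blast
qed

end
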